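(* Let $\gamma:\mathbb{R}/2\pi\mathbb{Z}\to\mathbb{R}^4$, $\gamma(t)=(\cos t,\sin t,\cos 2t,\sin 2t)$, where $\mathbb{R}^4$ carries its standard symplectic structure. Then the outer symplectic billiard correspondence with respect to (the image of) $\gamma$ has no non-degenerate $4$-periodic orbits.
   Context: For a closed curve (1-dimensional submanifold) $M\subset\mathbb{R}^4$ with symplectic form $\omega$, two points $z,z'$ are in outer symplectic billiard correspondence if $Q=\tfrac12(z+z')\in M$ and $\omega(z'-z,\zeta)=0$ for all $\zeta\in T_QM$. A $4$-periodic orbit is a tuple $(z_1,z_2,z_3,z_4)$ with $z_i,z_{i+1}$ in correspondence for $i=1,\dots,4$ (indices mod $4$); it is non-degenerate if there is no $i$ with $z_{i-1}=z_{i+1}$ (indices mod 4). *)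

theory Defs
  imports "HOL-Analysis.Analysis"
begin

definition omega4 :: "real^4 \<Rightarrow> real^4 \<Rightarrow> real" where
  "omega4 u v = u$1 * v$2 - u$2 * v$1 + u$3 * v$4 - u$4 * v$3"

definition gamma :: "real \<Rightarrow> real^4" where
  "gamma t = vector [cos t, sin t, cos (2*t), sin (2*t)]"

definition curveM :: "(real^4) set" where
  "curveM = range gamma"

definition tangent_space :: "real^4 \<Rightarrow> (real^4) set" where
  "tangent_space Q = {c *\<^sub>R vector_derivative gamma (at t) | c t. gamma t = Q}"

definition osb_corr :: "real^4 \<Rightarrow> real^4 \<Rightarrow> bool" where
  "osb_corr z z' \<longleftrightarrow>
     (let Q = (1/2) *\<^sub>R (z + z') in
        Q \<in> curveM \<and> (\<forall>\<zeta>\<in>tangent_space Q. omega4 (z' - z) \<zeta> = 0))"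

end

theory Submission
  imports Defs
begin

text \<open>Identifying \<open>\<real>\<^sup>4\<close> with \<open>\<complex>\<^sup>2\<close>, the curve is \<open>w \<mapsto> (w, w\<^sup>2)\<close> on the unit circle.
  The midpoints \<open>Q\<^sub>i = (z\<^sub>i + z\<^sub>i\<^sub>+\<^sub>1)/2\<close> of a 4-periodic orbit satisfy
  \<open>Q\<^sub>1 + Q\<^sub>3 = Q\<^sub>2 + Q\<^sub>4\<close>, so with \<open>Q\<^sub>i = (w\<^sub>i, w\<^sub>i\<^sup>2)\<close> the pairs \<open>{w\<^sub>1, w\<^sub>3}\<close> and
  \<open>{w\<^sub>2, w\<^sub>4}\<close> have the same sum and the same sum of squares, hence coincide.
  Then \<open>Q\<^sub>1 = Q\<^sub>2\<close> or \<open>Q\<^sub>1 = Q\<^sub>4\<close>, i.e. \<open>z\<^sub>1 = z\<^sub>3\<close> or \<open>z\<^sub>2 = z\<^sub>4\<close>: the orbit is degenerate.\<close>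

lemma sum_sum_squares_eq_imp_pair_eq:
  fixes x y p q :: "'a :: {idom, ring_char_0}"
  assumes sum: "x + y = p + q" and squares: "x\<^sup>2 + y\<^sup>2 = p\<^sup>2 + q\<^sup>2"
  shows "{x, y} = {p, q}"
proof -
  have "2 * (x * y) = (x + y)\<^sup>2 - (x\<^sup>2 + y\<^sup>2)" by algebra
  also have "\<dots> = (p + q)\<^sup>2 - (p\<^sup>2 + q\<^sup>2)" using sum squares by simp
  also have "\<dots> = 2 * (p * q)" by algebra
  finally have prod: "x * y = p * q" by simp
  have "(x - p) * (x - q) = x * x - x * (p + q) + p * q" by algebra
  also have "\<dots> = x * x - x * (x + y) + x * y" using sum prod by simp
  also have "\<dots> = 0" by algebra
  finally have "x = p \<or> x = q" by simp
  with sum show ?thesis by auto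
qed

definition moment2 :: "complex \<Rightarrow> real^4" where
  "moment2 w = vector [Re w, Im w, Re (w\<^sup>2), Im (w\<^sup>2)]"

lemma moment2_nth [simp]:
  "moment2 w $ 1 = Re w" "moment2 w $ 2 = Im w"
  "moment2 w $ 3 = Re (w\<^sup>2)" "moment2 w $ 4 = Im (w\<^sup>2)"
  unfolding moment2_def vector_def by simp_all

lemma moment2_add_eq_iff:
  "moment2 x + moment2 y = moment2 p + moment2 q \<longleftrightarrow>
     x + y = p + q \<and> x\<^sup>2 + y\<^sup>2 = p\<^sup>2 + q\<^sup>2"
  unfolding vec_eq_iff forall_4 vector_add_component moment2_nth complex_eq_iff plus_complex.sel
  by (simp only: conj_assoc)

lemma gamma_eq_moment2_cis: "gamma t = moment2 (cis t)"
proof -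
  have "(cis t)\<^sup>2 = cis (2 * t)" using Complex.DeMoivre [of t 2] by (simp only: of_nat_numeral)
  then show ?thesis by (simp add: vec_eq_iff forall_4 gamma_def vector_def)
qed

lemma curveM_parallelogram:
  assumes "P \<in> curveM" "Q \<in> curveM" "R \<in> curveM" "S \<in> curveM"
    and "P + R = Q + S"
  shows "{P, R} = {Q, S}"
proof -
  from assms(1-4) obtain a b c d where
    P: "P = moment2 (cis a)" and Q: "Q = moment2 (cis b)"
    and R: "R = moment2 (cis c)" and S: "S = moment2 (cis d)"
    unfolding curveM_def gamma_eq_moment2_cis by blast
  with assms(5) have "{cis a, cis c} = {cis b, cis d}"
    by (intro sum_sum_squares_eq_imp_pair_eq) (simp_all only: moment2_add_eq_iff)
  then have "moment2 ` {cis a, cis c} = moment2 ` {cis b, cis d}" by simp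
  with P Q R S show ?thesis by simp
qed

lemma osb_corr_midpoint_in_curveM:
  "osb_corr z z' \<Longrightarrow> (1/2) *\<^sub>R (z + z') \<in> curveM"
  by (simp add: osb_corr_def Let_def)

theorem mainTheorem6:
  shows "\<not> (\<exists>z1 z2 z3 z4 :: real^4.
            osb_corr z1 z2 \<and> osb_corr z2 z3 \<and> osb_corr z3 z4 \<and> osb_corr z4 z1 \<and>
            z4 \<noteq> z2 \<and> z1 \<noteq> z3 \<and> z2 \<noteq> z4 \<and> z3 \<noteq> z1)"
proof
  assume "\<exists>z1 z2 z3 z4 :: real^4.
            osb_corr z1 z2 \<and> osb_corr z2 z3 \<and> osb_corr z3 z4 \<and> osb_corr z4 z1 \<and>
            z4 \<noteq> z2 \<and> z1 \<noteq> z3 \<and> z2 \<noteq> z4 \<and> z3 \<noteq> z1"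
  then obtain z1 z2 z3 z4 :: "real^4" where
    corr: "osb_corr z1 z2" "osb_corr z2 z3" "osb_corr z3 z4" "osb_corr z4 z1"
    and nondeg: "z1 \<noteq> z3" "z2 \<noteq> z4" by blast
  let ?Q = "\<lambda>z z'. (1/2) *\<^sub>R (z + z') :: real^4"
  have "?Q z1 z2 + ?Q z3 z4 = ?Q z2 z3 + ?Q z4 z1"
    by (simp add: algebra_simps)
  with corr have "{?Q z1 z2, ?Q z3 z4} = {?Q z2 z3, ?Q z4 z1}"
    by (intro curveM_parallelogram osb_corr_midpoint_in_curveM)
  then have "z1 = z3 \<or> z2 = z4"
    by (auto simp: doubleton_eq_iff)
  with nondeg show False by blast
qed

end
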